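(* Let $D=(V,E;s,t)$, $N$, $\mathscr{B}$ be as in the context with $\sigma_N\ge2$, and let $k\ge1$. For every $x\in\widetilde X_k$ and every $(u,v)\in J\setminus J_k$, $$\phi_x(u)-\phi_x(v)\ \ge\ \min\Big\{\min_{O\in\bigcup_{e\in N\setminus N_k}\mathcal{O}^e_k}\mathrm{re}_x(O),\ \min_{R\in\bigcup_{(u',v')\in J\setminus J_k}\mathcal{R}^{(u',v')}_k}\mathrm{re}_x(R)\Big\}.$$
   Context: $D=(V,E;s,t)$ is a directed network with unit arc capacities (parallel arcs allowed); $N\subseteq E$ is the set of private arcs (players), $M=E\setminus N$ public arcs; every $s$-$t$ path contains an arc of $N$ and every arc lies on some $s$-$t$ path. A path is a set of arcs joining distinct vertices along one direction. $\sigma_N$ is the maximum number of $s$-$t$ paths pairwise sharing no arc of $N$. For $S\subseteq N$, $\gamma(S)$ is the maximum number of pairwise arc-disjoint $s$-$t$ paths in $D_S=(V,S\cup M;s,t)$. Auxiliary game $\widetilde\Gamma_D=(N,\tilde\gamma)$: $\tilde\gamma(N)=\sigma_N$, $\tilde\gamma(S)=\gamma(S)$ for $S\subsetneq N$; $x(S)=\sum_{i\in S}x_i$; $\chi(\widetilde\Gamma_D)=\{x\in\mathbb{R}^N_{\ge0}:x(N)=\sigma_N\}$. Relative excess: $\mathrm{re}_x(S)=(x(S)-\tilde\gamma(S))/\tilde\gamma(S)$ if $\tilde\gamma(S)>0$, $+\infty$ otherwise; a minimum over an empty collection is $+\infty$. $\mathrm{fix}(X)=\{S\subseteq N: x(S)\text{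 constant on }X\}$. Sequential LPs: $\widetilde X_0=\chi(\widetilde\Gamma_D)$, $\mathrm{fix}(\widetilde X_0)=\{\emptyset,N\}$; $\widetilde{LP}_{k+1}$ maximizes $\epsilon$ s.t. $x(S)\ge(1+\epsilon)\tilde\gamma(S)$ for $S\in2^N\setminus\mathrm{fix}(\widetilde X_k)$, $x\in\widetilde X_k$; $\epsilon_{k+1}$ is the optimum, $\widetilde X_{k+1}$ the set of $x$ with $(x,\epsilon_{k+1})$ optimal. Potential $\phi_x(v)$: length of a shortest $s$-$v$ path when arcs $e\in N$ have length $x(e)$, public arcs length $0$. Fix a maximum family $\mathscr{B}$ of $s$-$t$ paths pairwise sharing no arc of $N$. A $u$-$v$ jump is a $u$-$v$ path whose end vertices lie on paths of $\mathscr{B}$, with no intermediate vertex on a path of $\mathscr{B}$, and which is not a single arc of a path of $\mathscr{B}$; $(u,v)$ is its jump pair; $\mathscr{J}$ = all jumps, $J$ = all jump pairs. $N_k=\{e\in N: x(e)\text{ constant on }\widetilde X_k\}$, $J_k=\{(u,v)\in J:\phi_x(u)-\phi_x(v)\text{ constant on }\widetilde X_k\}$. $D_k$ is obtained from $D$ by deleting all arcs of all $u$-$v$ jumps in $\mathscr{J}$ with $(u,v)\notin J_k$. For $e\in N\setminus N_k$: $\mathcal{O}^e_k=\{(N\cap F)\cup\{e\}\}$, $F$ ranging over arc sets of families of pairwise arc-disjoint $s$-$t$ paths in $D_k-e$. For $(u,v)\in J\setminus J_k$: $\mathcal{R}^{(u,v)}_k=\{N\cap F\}$, $F$ ranging over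 arc sets of families of pairwise arc-disjoint $s$-$t$ paths in the network obtained from $D_k$ by adding the arcs of some $u$-$v$ jump $Q\in\mathscr{J}$, one path of the family containing $Q$. *)

theory Defs
  imports "HOL-Analysis.Analysis"
begin

text \<open>A directed network D = (V,E;s,t) with parallel arcs allowed: arcs are elements
  of an abstract type, with tail and head maps.\<close>

record ('v,'e) network =
  verts :: "'v set"
  arcs  :: "'e set"
  tail  :: "'e \<Rightarrow> 'v"
  head  :: "'e \<Rightarrow> 'v"
  src   :: 'v
  snk   :: 'v

fun walk :: "('v,'e) network \<Rightarrow> 'v \<Rightarrow> 'e list \<Rightarrow> 'v \<Rightarrow> bool" where
  "walk D u [] w = (u = w)"
| "walk D u (e # es) w = (tail D e = u \<and> walk D (head D e) es w)"

definition is_path :: "('v,'e) network \<Rightarrow> 'e set \<Rightarrow> 'v \<Rightarrow> 'v \<Rightarrow> 'e list \<Rightarrow> bool" where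
  "is_path D A u w es \<longleftrightarrow> es \<noteq> [] \<and> set es \<subseteq> A \<and> walk D u es w \<and> distinct (u # map (head D) es)"

definition disj_family :: "('v,'e) network \<Rightarrow> 'e set \<Rightarrow> 'e list list \<Rightarrow> bool" where
  "disj_family D A Ps \<longleftrightarrow> (\<forall>p\<in>set Ps. is_path D A (src D) (snk D) p) \<and>
     (\<forall>i<length Ps. \<forall>j<length Ps. i \<noteq> j \<longrightarrow> set (Ps!i) \<inter> set (Ps!j) = {})"

definition Ndisj_family :: "('v,'e) network \<Rightarrow> 'e set \<Rightarrow> 'e list list \<Rightarrow> bool" where
  "Ndisj_family D N Ps \<longleftrightarrow> (\<forall>p\<in>set Ps. is_path D (arcs D) (src D) (snk D) p) \<and>
     (\<forall>i<length Ps. \<forall>j<length Ps. i \<noteq> j \<longrightarrow> set (Ps!i) \<inter> set (Ps!j) \<inter> N = {})"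

definition sigmaN :: "('v,'e) network \<Rightarrow> 'e set \<Rightarrow> nat" where
  "sigmaN D N = Max {length Ps | Ps. Ndisj_family D N Ps}"

definition gamma :: "('v,'e) network \<Rightarrow> 'e set \<Rightarrow> 'e set \<Rightarrow> nat" where
  "gamma D N S = Max {length Ps | Ps. disj_family D (S \<union> (arcs D - N)) Ps}"

definition gt :: "('v,'e) network \<Rightarrow> 'e set \<Rightarrow> 'e set \<Rightarrow> real" where
  "gt D N S = (if S = N then real (sigmaN D N) else real (gamma D N S))"

definition chi :: "('v,'e) network \<Rightarrow> 'e set \<Rightarrow> ('e \<Rightarrow> real) set" where
  "chi D N = {x. (\<forall>e. e \<notin> N \<longrightarrow> x e = 0) \<and> (\<forall>e\<in>N. x e \<ge> 0) \<and> sum x N = real (sigmaN D N)}"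

definition fixset :: "'e set \<Rightarrow> ('e \<Rightarrow> real) set \<Rightarrow> 'e set set" where
  "fixset N X = {S. S \<subseteq> N \<and> (\<exists>c. \<forall>x\<in>X. sum x S = c)}"

definition lp_feasible :: "('v,'e) network \<Rightarrow> 'e set \<Rightarrow> ('e \<Rightarrow> real) set \<Rightarrow> ('e \<Rightarrow> real) \<Rightarrow> real \<Rightarrow> bool" where
  "lp_feasible D N X x \<epsilon> \<longleftrightarrow> x \<in> X \<and>
     (\<forall>S. S \<subseteq> N \<and> S \<notin> fixset N X \<longrightarrow> sum x S \<ge> (1 + \<epsilon>) * gt D N S)"

text \<open>The sets X_k: X_{k+1} is the set of x such that (x, eps) is optimal for LP_{k+1}.\<close>
primrec Xseq :: "('v,'e) network \<Rightarrow> 'e set \<Rightarrow> nat \<Rightarrow> ('e \<Rightarrow> real) set" where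
  "Xseq D N 0 = chi D N"
| "Xseq D N (Suc k) = {x. \<exists>\<epsilon>. lp_feasible D N (Xseq D N k) x \<epsilon> \<and>
      (\<forall>y \<delta>. lp_feasible D N (Xseq D N k) y \<delta> \<longrightarrow> \<delta> \<le> \<epsilon>)}"

definition re :: "('v,'e) network \<Rightarrow> 'e set \<Rightarrow> ('e \<Rightarrow> real) \<Rightarrow> 'e set \<Rightarrow> ereal" where
  "re D N x S = (if gt D N S > 0 then ereal ((sum x S - gt D N S) / gt D N S) else \<infinity>)"

definition phi :: "('v,'e) network \<Rightarrow> 'e set \<Rightarrow> ('e \<Rightarrow> real) \<Rightarrow> 'v \<Rightarrow> real" where
  "phi D N x v = (if v = src D then 0 else
     Inf {sum_list (map (\<lambda>e. if e \<in> N then x e else 0) p) | p. is_path D (arcs D) (src D) v p})"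

definition on_B :: "('v,'e) network \<Rightarrow> 'e list list \<Rightarrow> 'v \<Rightarrow> bool" where
  "on_B D B w \<longleftrightarrow> (\<exists>p\<in>set B. w \<in> set (src D # map (head D) p))"

definition is_jump :: "('v,'e) network \<Rightarrow> 'e list list \<Rightarrow> 'v \<Rightarrow> 'v \<Rightarrow> 'e list \<Rightarrow> bool" where
  "is_jump D B u v Q \<longleftrightarrow> is_path D (arcs D) u v Q \<and> on_B D B u \<and> on_B D B v \<and>
     (\<forall>w\<in>set (butlast (map (head D) Q)). \<not> on_B D B w) \<and>
     \<not> (\<exists>e. Q = [e] \<and> (\<exists>p\<in>set B. e \<in> set p))"

definition Jpairs :: "('v,'e) network \<Rightarrow> 'e list list \<Rightarrow> ('v \<times> 'v) set" where
  "Jpairs D B = {(u,v). \<exists>Q. is_jump D B u v Q}"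

definition Nk :: "('v,'e) network \<Rightarrow> 'e set \<Rightarrow> nat \<Rightarrow> 'e set" where
  "Nk D N k = {e\<in>N. \<exists>c. \<forall>x\<in>Xseq D N k. x e = c}"

definition Jk :: "('v,'e) network \<Rightarrow> 'e set \<Rightarrow> 'e list list \<Rightarrow> nat \<Rightarrow> ('v \<times> 'v) set" where
  "Jk D N B k = {(u,v)\<in>Jpairs D B. \<exists>c. \<forall>x\<in>Xseq D N k. phi D N x u - phi D N x v = c}"

definition Ek :: "('v,'e) network \<Rightarrow> 'e set \<Rightarrow> 'e list list \<Rightarrow> nat \<Rightarrow> 'e set" where
  "Ek D N B k = arcs D - \<Union>{set Q | Q u v. is_jump D B u v Q \<and> (u,v) \<notin> Jk D N B k}"

definition Ofam :: "('v,'e) network \<Rightarrow> 'e set \<Rightarrow> 'e list list \<Rightarrow> nat \<Rightarrow> 'e \<Rightarrow> 'e set set" where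
  "Ofam D N B k e = {(N \<inter> \<Union>(set ` set Ps)) \<union> {e} | Ps. disj_family D (Ek D N B k - {e}) Ps}"

definition Rfam :: "('v,'e) network \<Rightarrow> 'e set \<Rightarrow> 'e list list \<Rightarrow> nat \<Rightarrow> 'v \<Rightarrow> 'v \<Rightarrow> 'e set set" where
  "Rfam D N B k u v = {N \<inter> \<Union>(set ` set Ps) | Ps Q. is_jump D B u v Q \<and>
      disj_family D (Ek D N B k \<union> set Q) Ps \<and> (\<exists>P\<in>set Ps. set Q \<subseteq> set P)}"

end

theory Submission
  imports Defs "HOL-Library.Transitive_Closure_Table"
begin

text \<open>Every \<open>x \<in> X\<^sub>k\<close> (\<open>k \<ge> 1\<close>) is a fractional \<open>N\<close>-cut: by the max-flow min-cut theorem
  there is a cut of \<open>\<sigma>\<^sub>N\<close> private arcs, and its indicator vector is feasible for \<open>LP\<^sub>1\<close> with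
  \<open>\<epsilon> = 0\<close>; hence \<open>\<epsilon>\<^sub>1 \<ge> 0\<close> and every \<open>s\<close>-\<open>t\<close> path has \<open>x\<close>-weight at least \<open>\<gamma> = 1\<close>.
  As \<open>x(N) = \<sigma>\<^sub>N\<close>, every path of \<open>\<B>\<close> has weight exactly 1, \<open>x\<close> vanishes on the private
  arcs off \<open>\<B>\<close> (in particular on every jump), and \<open>\<phi>\<^sub>x\<close> along a path of \<open>\<B>\<close> is the weight of
  its prefix.

  Let \<open>Q\<close> be a \<open>u\<close>-\<open>v\<close> jump and \<open>P\<^sub>u, P\<^sub>v\<close> paths of \<open>\<B>\<close> through \<open>u\<close> and \<open>v\<close>. If
  \<open>P\<^sub>u[s,u] Q P\<^sub>v[v,t]\<close> is a path, its private arcs form a set \<open>R\<close> of the family \<open>\<R>\<^sub>k\<close> of \<open>(u,v)\<close>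
  with \<open>x(R) = 1 + \<phi>\<^sub>x(u) - \<phi>\<^sub>x(v)\<close>. Otherwise it meets itself in a vertex \<open>z\<close>, and on all of
  \<open>X\<^sub>k\<close> the difference \<open>\<phi>(u) - \<phi>(v)\<close> is the weight of the segments \<open>P\<^sub>u[z,u]\<close> and
  \<open>P\<^sub>v[v,z]\<close>. Since \<open>(u,v) \<notin> J\<^sub>k\<close>, these contain a private arc \<open>e \<notin> N\<^sub>k\<close>, and \<open>e\<close>
  together with the private arcs of another path of \<open>\<B>\<close> (here \<open>\<sigma>\<^sub>N \<ge> 2\<close> is used) is a
  set \<open>O\<close> of the family \<open>\<O>\<^sub>k\<close> of \<open>e\<close> with \<open>x(O) \<le> 1 + x(e) \<le> 1 + \<phi>\<^sub>x(u) - \<phi>\<^sub>x(v)\<close>. In both cases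
  \<open>\<gamma> \<ge> 1\<close> turns the bound on \<open>x\<close> into \<open>re\<^sub>x \<le> \<phi>\<^sub>x(u) - \<phi>\<^sub>x(v)\<close>.\<close>

section \<open>Walks and paths\<close>

lemma walk_append: "walk D a (L1 @ L2) c \<longleftrightarrow> (\<exists>b. walk D a L1 b \<and> walk D b L2 c)"
  by (induction L1 arbitrary: a) auto

lemma walk_arc_ends:
  "walk D a L b \<Longrightarrow> e \<in> set L \<Longrightarrow>
    tail D e \<in> set (a # map (head D) L) \<and> head D e \<in> set (map (head D) L)"
  by (induction L arbitrary: a) auto

lemma walk_end_mem: "walk D a L b \<Longrightarrow> b \<in> set (a # map (head D) L)"
  by (induction L arbitrary: a) auto

lemma walk_end_last: "walk D a L b \<Longrightarrow> L \<noteq> [] \<Longrightarrow> b = last (map (head D) L)"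
proof (induction L arbitrary: a)
  case (Cons e L)
  then show ?case by (cases L) auto
qed simp

lemma walk_split_at_vertex:
  assumes "walk D a L b" "w \<in> set (a # map (head D) L)"
  obtains L1 L2 where "L = L1 @ L2" "walk D a L1 w" "walk D w L2 b"
proof -
  have "\<exists>L1 L2. L = L1 @ L2 \<and> walk D a L1 w \<and> walk D w L2 b"
    using assms
  proof (induction L arbitrary: a)
    case (Cons e L)
    show ?case
    proof (cases "w = a")
      case True
      then show ?thesis using Cons.prems by (intro exI[of _ "[]"] exI[of _ "e # L"]) auto
    next
      case False
      then have "walk D (head D e) L b" "w \<in> set (head D e # map (head D) L)"
        using Cons.prems by auto
      then obtain L1 L2 where "L = L1 @ L2" "walk D (head D e) L1 w" "walk D w L2 b"
        using Cons.IH by blast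
      then show ?thesis using Cons.prems by (intro exI[of _ "e # L1"] exI[of _ L2]) auto
    qed
  qed auto
  then show ?thesis using that by blast
qed

lemma walk_leaves_set:
  "walk D a L b \<Longrightarrow> a \<in> R \<Longrightarrow> b \<notin> R \<Longrightarrow> \<exists>e\<in>set L. tail D e \<in> R \<and> head D e \<notin> R"
  by (induction L arbitrary: a) auto

lemma walk_avoids_set:
  "walk D a L b \<Longrightarrow> a \<notin> R \<Longrightarrow> \<forall>e\<in>set L. head D e \<in> R \<longrightarrow> tail D e \<in> R \<Longrightarrow> b \<notin> R"
  by (induction L arbitrary: a) auto

lemma walk_between_arcs:
  "walk D a (L1 @ e # M @ e' # L2) b \<Longrightarrow> walk D (head D e) M (tail D e')"
  by (auto simp: walk_append)

definition arc_rel :: "('v,'e) network \<Rightarrow> 'e set \<Rightarrow> 'v \<Rightarrow> 'v \<Rightarrow> bool" where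
  "arc_rel D A a b \<longleftrightarrow> (\<exists>e\<in>A. tail D e = a \<and> head D e = b)"

lemma walk_imp_rtrancl_path:
  "walk D a L b \<Longrightarrow> set L \<subseteq> A \<Longrightarrow> rtrancl_path (arc_rel D A) a (map (head D) L) b"
proof (induction L arbitrary: a)
  case (Cons e L)
  then have "arc_rel D A a (head D e)" by (auto simp: arc_rel_def)
  with Cons show ?case by (auto intro: rtrancl_path.step)
qed (auto intro: rtrancl_path.base)

lemma rtrancl_path_imp_walk:
  "rtrancl_path (arc_rel D A) a vs b \<Longrightarrow> \<exists>L. walk D a L b \<and> set L \<subseteq> A \<and> map (head D) L = vs"
proof (induction rule: rtrancl_path.induct)
  case (base a)
  show ?case by (intro exI[of _ "[]"]) auto
next
  case (step a b vs c)
  then obtain L e where "walk D b L c" "set L \<subseteq> A" "map (head D) L = vs"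
    and "e \<in> A" "tail D e = a" "head D e = b"
    by (auto simp: arc_rel_def)
  then show ?case by (intro exI[of _ "e # L"]) auto
qed

lemma rtranclp_arc_rel_imp_walk:
  "(arc_rel D A)\<^sup>*\<^sup>* a b \<Longrightarrow> \<exists>L. walk D a L b \<and> set L \<subseteq> A"
  by (auto simp: rtranclp_eq_rtrancl_path dest: rtrancl_path_imp_walk)

lemma walk_imp_path:
  assumes "walk D a L b" "a \<noteq> b" "set L \<subseteq> A"
  obtains p where "is_path D A a b p" "set p \<subseteq> set L"
proof -
  have "rtrancl_path (arc_rel D (set L)) a (map (head D) L) b"
    using walk_imp_rtrancl_path[OF assms(1)] by simp
  then obtain vs where vs: "rtrancl_path (arc_rel D (set L)) a vs b" "distinct (a # vs)"
    by (rule rtrancl_path_distinct)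
  obtain p where p: "walk D a p b" "set p \<subseteq> set L" "map (head D) p = vs"
    using rtrancl_path_imp_walk[OF vs(1)] by blast
  moreover have "distinct (a # map (head D) p)" using p(3) vs(2) by simp
  moreover have "p \<noteq> []" using \<open>walk D a p b\<close> assms(2) by (cases p) auto
  ultimately have "is_path D A a b p" using assms(3) unfolding is_path_def by auto
  then show ?thesis using that p(2) by blast
qed

lemma is_path_distinct: "is_path D A a b p \<Longrightarrow> distinct p"
  unfolding is_path_def by (simp add: distinct_map)

lemma is_path_mono: "is_path D A a b p \<Longrightarrow> A \<subseteq> A' \<Longrightarrow> is_path D A' a b p"
  unfolding is_path_def by auto

lemma disj_family_singleton: "is_path D A (src D) (snk D) p \<Longrightarrow> disj_family D A [p]"
  unfolding disj_family_def by auto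

lemma length_le_card_if_hit:
  assumes "finite F"
    and "\<forall>i<length Ps. set (Ps!i) \<inter> F \<noteq> {}"
    and "\<forall>i<length Ps. \<forall>j<length Ps. i \<noteq> j \<longrightarrow> set (Ps!i) \<inter> set (Ps!j) \<inter> F = {}"
  shows "length Ps \<le> card F"
proof -
  define c where "c i = (SOME e. e \<in> set (Ps!i) \<inter> F)" for i
  have c: "c i \<in> set (Ps!i) \<inter> F" if "i < length Ps" for i
    unfolding c_def using assms(2) that by (metis ex_in_conv someI_ex)
  have "inj_on c {..<length Ps}"
  proof (rule inj_onI)
    fix i j assume ij: "i \<in> {..<length Ps}" "j \<in> {..<length Ps}" "c i = c j"
    show "i = j"
    proof (rule ccontr)
      assume "i \<noteq> j"
      then have "set (Ps!i) \<inter> set (Ps!j) \<inter> F = {}" using assms(3) ij by auto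
      moreover have "c i \<in> set (Ps!i) \<inter> set (Ps!j) \<inter> F" using c[of i] c[of j] ij by auto
      ultimately show False by blast
    qed
  qed
  moreover have "c ` {..<length Ps} \<subseteq> F" using c by auto
  ultimately have "card {..<length Ps} \<le> card F"
    using assms(1) by (intro card_inj_on_le) auto
  then show ?thesis by simp
qed

section \<open>Path weights\<close>

definition path_weight :: "'e set \<Rightarrow> ('e \<Rightarrow> real) \<Rightarrow> 'e list \<Rightarrow> real" where
  "path_weight N x L = (\<Sum>e\<leftarrow>L. if e \<in> N then x e else 0)"

lemma path_weight_append [simp]:
  "path_weight N x (L1 @ L2) = path_weight N x L1 + path_weight N x L2"
  unfolding path_weight_def by simp

lemma path_weight_distinct: "distinct L \<Longrightarrow> path_weight N x L = sum x (set L \<inter> N)"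
  unfolding path_weight_def by (simp add: sum_list_distinct_conv_sum_set sum.inter_restrict)

lemma sum_set_le_sum_list:
  fixes f :: "'a \<Rightarrow> real"
  assumes "\<forall>e\<in>set L. 0 \<le> f e"
  shows "sum f (set L) \<le> (\<Sum>e\<leftarrow>L. f e)"
  using assms
proof (induction L)
  case (Cons a L)
  then show ?case by (cases "a \<in> set L") (auto simp: insert_absorb)
qed simp

lemma sum_le_path_weight:
  "\<forall>e\<in>N. 0 \<le> x e \<Longrightarrow> sum x (set L \<inter> N) \<le> path_weight N x L"
  using sum_set_le_sum_list[of L "\<lambda>e. if e \<in> N then x e else 0"]
  unfolding path_weight_def by (simp add: sum.inter_restrict)

lemma arc_le_path_weight:
  "\<forall>e\<in>N. 0 \<le> x e \<Longrightarrow> e \<in> set L \<Longrightarrow> e \<in> N \<Longrightarrow> x e \<le> path_weight N x L"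
  using member_le_sum_list[of "x e" "map (\<lambda>e. if e \<in> N then x e else 0) L"]
  unfolding path_weight_def by force

lemma path_weight_eq_0: "\<forall>e\<in>set L \<inter> N. x e = 0 \<Longrightarrow> path_weight N x L = 0"
  unfolding path_weight_def by (induction L) auto

section \<open>Flows and the min-cut theorem\<close>

primrec load :: "'e list list \<Rightarrow> 'e \<Rightarrow> nat" where
  "load [] e = 0"
| "load (p # Ps) e = count_list p e + load Ps e"

lemma count_list_le_load: "p \<in> set Ps \<Longrightarrow> count_list p e \<le> load Ps e"
  by (induction Ps) auto

lemma load_eq_0_iff: "load Ps e = 0 \<longleftrightarrow> (\<forall>p\<in>set Ps. e \<notin> set p)"
  by (induction Ps) (auto simp: count_list_0_iff)

lemma load_eq_sum_nth: "load Ps e = (\<Sum>l<length Ps. count_list (Ps!l) e)"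
proof -
  have "load Ps e = (\<Sum>p\<leftarrow>Ps. count_list p e)" by (induction Ps) auto
  then show ?thesis by (simp add: sum_list_sum_nth atLeast0LessThan)
qed

lemma count_list_pair_le_load:
  assumes "i < length Ps" "j < length Ps" "i \<noteq> j"
  shows "count_list (Ps!i) e + count_list (Ps!j) e \<le> load Ps e"
proof -
  have "(\<Sum>l\<in>{i,j}. count_list (Ps!l) e) \<le> (\<Sum>l<length Ps. count_list (Ps!l) e)"
    using assms by (intro sum_mono2) auto
  then show ?thesis using assms(3) by (simp add: load_eq_sum_nth)
qed

lemma count_list_distinct: "distinct xs \<Longrightarrow> count_list xs x = of_bool (x \<in> set xs)"
  by (induction xs) auto

locale finite_network =
  fixes D :: "('v,'e) network"
  assumes finite_verts: "finite (verts D)" and finite_arcs: "finite (arcs D)"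
    and arc_ends: "\<forall>e\<in>arcs D. tail D e \<in> verts D \<and> head D e \<in> verts D"
    and src_vert: "src D \<in> verts D" and src_ne_snk: "src D \<noteq> snk D"
begin

abbreviation "s \<equiv> src D"
abbreviation "t \<equiv> snk D"

definition net_out :: "('e \<Rightarrow> int) \<Rightarrow> 'v \<Rightarrow> int" where
  "net_out g v = (\<Sum>e | e \<in> arcs D \<and> tail D e = v. g e) - (\<Sum>e | e \<in> arcs D \<and> head D e = v. g e)"

definition st_flow :: "('e \<Rightarrow> int) \<Rightarrow> nat \<Rightarrow> bool" where
  "st_flow g m \<longleftrightarrow> (\<forall>e\<in>arcs D. 0 \<le> g e) \<and>
     (\<forall>v. net_out g v = int m * (of_bool (v = s) - of_bool (v = t)))"

lemma net_out_add: "net_out (\<lambda>e. g1 e + g2 e) v = net_out g1 v + net_out g2 v"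
  unfolding net_out_def by (simp add: sum.distrib)

lemma net_out_diff: "net_out (\<lambda>e. g1 e - g2 e) v = net_out g1 v - net_out g2 v"
  unfolding net_out_def by (simp add: sum_subtractf)

lemma net_out_zero [simp]: "net_out (\<lambda>e. 0) v = 0"
  unfolding net_out_def by simp

lemma net_out_single_arc:
  assumes "e0 \<in> arcs D"
  shows "net_out (\<lambda>e. if e = e0 then c else 0) v =
    (if tail D e0 = v then c else 0) - (if head D e0 = v then c else 0)"
proof -
  have "finite {e. e \<in> arcs D \<and> f e = v}" for f :: "'e \<Rightarrow> 'v"
    using finite_arcs by simp
  then show ?thesis using assms unfolding net_out_def by (simp add: sum.delta)
qed

lemma net_out_walk:
  "walk D a L b \<Longrightarrow> set L \<subseteq> arcs D \<Longrightarrow>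
    net_out (\<lambda>e. int (count_list L e)) v = of_bool (v = a) - of_bool (v = b)"
proof (induction L arbitrary: a)
  case (Cons e0 L)
  have "(\<lambda>e. int (count_list (e0 # L) e)) = (\<lambda>e. (if e = e0 then 1 else 0) + int (count_list L e))"
    by auto
  then show ?case
    using Cons net_out_single_arc[of e0 1 v] by (auto simp: net_out_add)
qed simp

lemma paths_st_flow:
  assumes "\<forall>p\<in>set Ps. is_path D (arcs D) s t p"
  shows "st_flow (\<lambda>e. int (load Ps e)) (length Ps)"
proof -
  have "net_out (\<lambda>e. int (load Ps e)) v = int (length Ps) * (of_bool (v = s) - of_bool (v = t))"
    for v
    using assms
  proof (induction Ps)
    case (Cons p Ps)
    have "net_out (\<lambda>e. int (count_list p e)) v = of_bool (v = s) - of_bool (v = t)"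
      using Cons.prems net_out_walk unfolding is_path_def by auto
    then show ?case
      using Cons net_out_add[of "\<lambda>e. int (count_list p e)" "\<lambda>e. int (load Ps e)" v]
      by (simp add: algebra_simps)
  qed simp
  then show ?thesis unfolding st_flow_def by simp
qed

lemma sum_net_out:
  assumes "finite V"
  shows "(\<Sum>v\<in>V. net_out g v) =
    sum g {e\<in>arcs D. tail D e \<in> V} - sum g {e\<in>arcs D. head D e \<in> V}"
proof -
  have "(\<Sum>v\<in>V. \<Sum>e | e \<in> arcs D \<and> f e = v. g e) = sum g {e\<in>arcs D. f e \<in> V}" for f
  proof -
    have "(\<Sum>v\<in>V. \<Sum>e | e \<in> arcs D \<and> f e = v. g e) =
        (\<Sum>v\<in>V. sum g {e\<in>{e\<in>arcs D. f e \<in> V}. f e = v})"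
      by (intro sum.cong) auto
    also have "\<dots> = sum g {e\<in>arcs D. f e \<in> V}"
      using finite_arcs assms by (intro sum.group) auto
    finally show ?thesis .
  qed
  then show ?thesis unfolding net_out_def by (simp add: sum_subtractf)
qed

lemma sum_net_out_le_0_if_closed:
  assumes "finite R" and nonneg: "\<forall>e\<in>arcs D. 0 \<le> g e"
    and closed: "\<forall>e\<in>arcs D. tail D e \<in> R \<and> 0 < g e \<longrightarrow> head D e \<in> R"
  shows "(\<Sum>v\<in>R. net_out g v) \<le> 0"
proof -
  define X where "X = {e\<in>arcs D. tail D e \<in> R}"
  define Y where "Y = {e\<in>arcs D. head D e \<in> R}"
  have "g e = 0" if "e \<in> X - (X \<inter> Y)" for e
    using that nonneg closed unfolding X_def Y_def by force
  then have "sum g X = sum g (X \<inter> Y)"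
    using finite_arcs unfolding X_def by (intro sum.mono_neutral_right) auto
  also have "\<dots> \<le> sum g Y"
    using finite_arcs nonneg unfolding Y_def by (intro sum_mono2) auto
  finally show ?thesis unfolding sum_net_out[OF assms(1)] X_def Y_def by simp
qed

text \<open>The vertices reachable from \<open>s\<close> along arcs of positive flow form a set without
  positive net outflow, so for a flow of positive value it must contain \<open>t\<close>.\<close>

lemma exists_positive_path:
  assumes g: "st_flow g m" and m: "0 < m"
  obtains P where "is_path D (arcs D) s t P" "\<forall>e\<in>set P. 1 \<le> g e"
proof -
  define A1 where "A1 = {e\<in>arcs D. 1 \<le> g e}"
  define R where "R = {w. (arc_rel D A1)\<^sup>*\<^sup>* s w} \<inter> verts D"
  have "(arc_rel D A1)\<^sup>*\<^sup>* s t"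
  proof (rule ccontr)
    assume "\<not> (arc_rel D A1)\<^sup>*\<^sup>* s t"
    then have "t \<notin> R" unfolding R_def by simp
    moreover have "s \<in> R" "finite R" using src_vert finite_verts unfolding R_def by auto
    ultimately have "(\<Sum>v\<in>R. net_out g v) = (\<Sum>v\<in>R. if v = s then int m else 0)"
      using g unfolding st_flow_def by (intro sum.cong) auto
    also have "\<dots> = int m" using \<open>s \<in> R\<close> \<open>finite R\<close> by simp
    moreover have "head D e \<in> R" if "e \<in> arcs D" "tail D e \<in> R" "0 < g e" for e
    proof -
      have "arc_rel D A1 (tail D e) (head D e)" using that unfolding A1_def arc_rel_def by auto
      then show ?thesis
        using that(2) arc_ends that(1) unfolding R_def by (auto intro: rtranclp.rtrancl_into_rtrancl)
    qed
    then have "(\<Sum>v\<in>R. net_out g v) \<le> 0"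
      using \<open>finite R\<close> g unfolding st_flow_def by (intro sum_net_out_le_0_if_closed) auto
    ultimately show False using m by simp
  qed
  then obtain L where L: "walk D s L t" "set L \<subseteq> A1"
    using rtranclp_arc_rel_imp_walk by metis
  have "set L \<subseteq> arcs D" using L(2) unfolding A1_def by auto
  then obtain P where P: "is_path D (arcs D) s t P" "set P \<subseteq> set L"
    by (rule walk_imp_path[OF L(1) src_ne_snk])
  moreover have "\<forall>e\<in>set P. 1 \<le> g e" using P(2) L(2) unfolding A1_def by auto
  ultimately show ?thesis using that by blast
qed

lemma flow_decomposition:
  assumes "st_flow g m"
  shows "\<exists>Ps. length Ps = m \<and> (\<forall>p\<in>set Ps. is_path D (arcs D) s t p) \<and>
    (\<forall>e\<in>arcs D. int (load Ps e) \<le> g e)"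
  using assms
proof (induction m arbitrary: g)
  case 0
  then show ?case unfolding st_flow_def by (intro exI[of _ "[]"]) simp
next
  case (Suc m)
  have g_nonneg: "0 \<le> g e" if "e \<in> arcs D" for e
    using Suc.prems that unfolding st_flow_def by simp
  obtain P where P: "is_path D (arcs D) s t P" "\<forall>e\<in>set P. 1 \<le> g e"
    using exists_positive_path[OF Suc.prems zero_less_Suc] by metis
  define g' where "g' e = g e - int (count_list P e)" for e
  have "0 \<le> g' e" if "e \<in> arcs D" for e
    using P(2) g_nonneg[OF that] count_list_distinct[OF is_path_distinct[OF P(1)], of e]
    unfolding g'_def by (cases "e \<in> set P") auto
  moreover have "net_out g' v = int m * (of_bool (v = s) - of_bool (v = t))" for v
  proof -
    have "net_out (\<lambda>e. int (count_list P e)) v = of_bool (v = s) - of_bool (v = t)"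
      using P(1) unfolding is_path_def by (intro net_out_walk) auto
    then have "net_out g' v = net_out g v - (of_bool (v = s) - of_bool (v = t))"
      unfolding g'_def net_out_diff by simp
    then show ?thesis using Suc.prems unfolding st_flow_def by (simp add: algebra_simps)
  qed
  ultimately have "st_flow g' m" unfolding st_flow_def by blast
  then obtain Ps where Ps: "length Ps = m" "\<forall>p\<in>set Ps. is_path D (arcs D) s t p"
      "\<forall>e\<in>arcs D. int (load Ps e) \<le> g' e"
    using Suc.IH by blast
  then show ?case using P(1) by (intro exI[of _ "P # Ps"]) (auto simp: g'_def)
qed

end

locale private_network = finite_network D for D :: "('v,'e) network" +
  fixes N :: "'e set"
  assumes private_arcs: "N \<subseteq> arcs D"
    and paths_meet_private: "\<forall>p. is_path D (arcs D) s t p \<longrightarrow> set p \<inter> N \<noteq> {}"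
begin

abbreviation "\<sigma> \<equiv> sigmaN D N"

lemma finite_private: "finite N"
  using private_arcs finite_arcs by (rule finite_subset)

lemma Ndisj_family_length_le_card: "Ndisj_family D N Ps \<Longrightarrow> length Ps \<le> card N"
  using paths_meet_private finite_private unfolding Ndisj_family_def
  by (intro length_le_card_if_hit) auto

lemma finite_Ndisj_family_lengths: "finite {length Ps | Ps. Ndisj_family D N Ps}"
proof (rule finite_subset)
  show "{length Ps | Ps. Ndisj_family D N Ps} \<subseteq> {..card N}"
    using Ndisj_family_length_le_card by auto
qed simp

lemma Ndisj_family_length_le_sigma: "Ndisj_family D N Ps \<Longrightarrow> length Ps \<le> \<sigma>"
  unfolding sigmaN_def using finite_Ndisj_family_lengths by (intro Max_ge) auto

lemma exists_max_Ndisj_family: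
  obtains B where "Ndisj_family D N B" "length B = \<sigma>"
proof -
  have "Ndisj_family D N []" unfolding Ndisj_family_def by simp
  then have "\<sigma> \<in> {length Ps | Ps. Ndisj_family D N Ps}"
    unfolding sigmaN_def using finite_Ndisj_family_lengths by (intro Max_in) auto
  then show ?thesis using that by auto
qed

lemma one_le_sigma_if_path: "is_path D (arcs D) s t P \<Longrightarrow> 1 \<le> \<sigma>"
  using Ndisj_family_length_le_sigma[of "[P]"] unfolding Ndisj_family_def by simp

lemma disj_family_length_le_card:
  assumes "disj_family D A Ps" "A \<subseteq> arcs D"
  shows "length Ps \<le> card (arcs D)"
proof (rule length_le_card_if_hit[OF finite_arcs])
  have "Ps!i \<noteq> [] \<and> set (Ps!i) \<subseteq> arcs D" if "i < length Ps" for i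
    using assms that unfolding disj_family_def is_path_def by (meson nth_mem order_trans)
  then show "\<forall>i<length Ps. set (Ps!i) \<inter> arcs D \<noteq> {}" by (metis inf.absorb1 set_empty)
  show "\<forall>i<length Ps. \<forall>j<length Ps. i \<noteq> j \<longrightarrow> set (Ps!i) \<inter> set (Ps!j) \<inter> arcs D = {}"
    using assms(1) unfolding disj_family_def by blast
qed

lemma length_le_gamma:
  assumes "disj_family D (S \<union> (arcs D - N)) Ps" "S \<subseteq> arcs D"
  shows "length Ps \<le> gamma D N S"
proof -
  have "{length Ps | Ps. disj_family D (S \<union> (arcs D - N)) Ps} \<subseteq> {..card (arcs D)}"
    using disj_family_length_le_card assms(2) by fastforce
  then have "finite {length Ps | Ps. disj_family D (S \<union> (arcs D - N)) Ps}"
    using finite_subset by blast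
  then show ?thesis unfolding gamma_def using assms(1) by (intro Max_ge) auto
qed

lemma gamma_le:
  assumes "\<And>Ps. disj_family D (S \<union> (arcs D - N)) Ps \<Longrightarrow> length Ps \<le> m"
  shows "gamma D N S \<le> m"
proof -
  have "{length Ps | Ps. disj_family D (S \<union> (arcs D - N)) Ps} \<subseteq> {..m}"
    using assms by auto
  then have "finite {length Ps | Ps. disj_family D (S \<union> (arcs D - N)) Ps}"
    using finite_subset by blast
  moreover have "disj_family D (S \<union> (arcs D - N)) []" unfolding disj_family_def by simp
  ultimately show ?thesis unfolding gamma_def using assms by (subst Max_le_iff) auto
qed

lemma one_le_gamma_if_path:
  assumes "is_path D (arcs D) s t P" "set P \<inter> N \<subseteq> T" "T \<subseteq> N"
  shows "1 \<le> gamma D N T"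
proof -
  have "is_path D (T \<union> (arcs D - N)) s t P" using assms(1,2) unfolding is_path_def by auto
  then have "length [P] \<le> gamma D N T"
    using assms(3) private_arcs by (intro length_le_gamma disj_family_singleton) auto
  then show ?thesis by simp
qed


lemma Ndisj_family_of_flow:
  assumes g: "st_flow g m" and le_1: "\<forall>e\<in>N. g e \<le> 1"
  obtains Ps where "Ndisj_family D N Ps" "length Ps = m"
proof -
  obtain Ps where Ps: "length Ps = m" "\<forall>p\<in>set Ps. is_path D (arcs D) s t p"
      "\<forall>e\<in>arcs D. int (load Ps e) \<le> g e"
    using flow_decomposition[OF g] by blast
  have "set (Ps!i) \<inter> set (Ps!j) \<inter> N = {}" if ij: "i < length Ps" "j < length Ps" "i \<noteq> j" for i j
  proof (rule ccontr)
    assume "set (Ps!i) \<inter> set (Ps!j) \<inter> N \<noteq> {}"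
    then obtain e where e: "e \<in> set (Ps!i)" "e \<in> set (Ps!j)" "e \<in> N" by auto
    then have "count_list (Ps!i) e \<noteq> 0" "count_list (Ps!j) e \<noteq> 0"
      by (simp_all add: count_list_0_iff)
    then have "2 \<le> load Ps e" using count_list_pair_le_load[OF ij, of e] by linarith
    then show False using Ps(3) le_1 e(3) private_arcs by force
  qed
  then have "Ndisj_family D N Ps" using Ps(2) unfolding Ndisj_family_def by blast
  then show ?thesis using that Ps(1) by blast
qed

end

fun augment_count :: "('v \<Rightarrow> 'v \<Rightarrow> 'e \<times> bool) \<Rightarrow> 'v \<Rightarrow> 'v list \<Rightarrow> 'e \<Rightarrow> int" where
  "augment_count c a [] e = 0"
| "augment_count c a (b # vs) e =
    (if e = fst (c a b) then (if snd (c a b) then 1 else -1) else 0) + augment_count c b vs e"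

locale max_private_family = private_network D N for D :: "('v,'e) network" and N +
  fixes B :: "'e list list"
  assumes B_family: "Ndisj_family D N B" and B_length: "length B = \<sigma>"
begin

lemma B_path: "p \<in> set B \<Longrightarrow> is_path D (arcs D) s t p"
  using B_family unfolding Ndisj_family_def by auto

lemma B_disjoint: "i < \<sigma> \<Longrightarrow> j < \<sigma> \<Longrightarrow> i \<noteq> j \<Longrightarrow> set (B!i) \<inter> set (B!j) \<inter> N = {}"
  using B_family B_length unfolding Ndisj_family_def by auto

lemma load_B_pos:
  assumes "load B e \<noteq> 0"
  shows "\<exists>i<\<sigma>. e \<in> set (B!i)"
proof -
  obtain p where "p \<in> set B" "e \<in> set p" using assms by (auto simp: load_eq_0_iff)
  then show ?thesis using B_length by (metis in_set_conv_nth)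
qed

lemma load_B_le_1:
  assumes "e \<in> N"
  shows "load B e \<le> 1"
proof (cases "load B e = 0")
  case False
  then obtain i where i: "i < \<sigma>" "e \<in> set (B!i)" using load_B_pos by blast
  have "count_list (B!l) e = 0" if "l \<in> {..<\<sigma>} - {i}" for l
  proof -
    have "e \<notin> set (B!l)" using B_disjoint[of i l] i assms that by blast
    then show ?thesis by simp
  qed
  then have "load B e = count_list (B!i) e"
    using i B_length by (simp add: load_eq_sum_nth sum.remove[of _ i])
  also have "\<dots> = 1"
    using i B_length count_list_distinct[OF is_path_distinct[OF B_path]] by simp
  finally show ?thesis by simp
qed simp

text \<open>The residual graph of the flow \<open>load B\<close>, where private arcs have capacity 1 and public
  arcs unbounded capacity: an arc can be used forwards (flag \<open>True\<close>) unless it is a saturated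
  private arc, and backwards (flag \<open>False\<close>) if it carries flow.\<close>

definition residual_step :: "'v \<Rightarrow> 'v \<Rightarrow> 'e \<times> bool \<Rightarrow> bool" where
  "residual_step a b ed \<longleftrightarrow> fst ed \<in> arcs D \<and>
    (if snd ed then tail D (fst ed) = a \<and> head D (fst ed) = b \<and> (fst ed \<notin> N \<or> load B (fst ed) = 0)
     else head D (fst ed) = a \<and> tail D (fst ed) = b \<and> 1 \<le> load B (fst ed))"

definition residual :: "'v \<Rightarrow> 'v \<Rightarrow> bool" where
  "residual a b \<longleftrightarrow> (\<exists>ed. residual_step a b ed)"

definition residual_choice :: "'v \<Rightarrow> 'v \<Rightarrow> 'e \<times> bool" where
  "residual_choice a b = (SOME ed. residual_step a b ed)"

lemma residual_choice_step: "residual a b \<Longrightarrow> residual_step a b (residual_choice a b)"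
  unfolding residual_def residual_choice_def by (rule someI_ex)

lemma residual_forward: "e \<in> arcs D \<Longrightarrow> e \<notin> N \<or> load B e = 0 \<Longrightarrow> residual (tail D e) (head D e)"
  unfolding residual_def residual_step_def by (intro exI[of _ "(e, True)"]) auto

lemma residual_backward: "e \<in> arcs D \<Longrightarrow> 1 \<le> load B e \<Longrightarrow> residual (head D e) (tail D e)"
  unfolding residual_def residual_step_def by (intro exI[of _ "(e, False)"]) auto

lemma B_path_reenters_residual_reachable:
  assumes P: "P \<in> set B" "P = L1 @ f1 # M @ f2 # L3"
    and "\<not> residual\<^sup>*\<^sup>* s (head D f1)" "residual\<^sup>*\<^sup>* s (tail D f2)"
  shows False
proof -
  have "walk D s P t" "set P \<subseteq> arcs D" using B_path[OF P(1)] unfolding is_path_def by auto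
  then have "walk D (head D f1) M (tail D f2)" using P(2) walk_between_arcs[of D s L1 f1 M f2 L3 t] by simp
  moreover have "residual\<^sup>*\<^sup>* s (tail D e)" if "e \<in> set M" "residual\<^sup>*\<^sup>* s (head D e)" for e
  proof -
    have "e \<in> set P" using that(1) P(2) by simp
    then have "e \<in> arcs D" "count_list P e \<noteq> 0"
      using \<open>set P \<subseteq> arcs D\<close> by (auto simp: count_list_0_iff)
    then have "residual (head D e) (tail D e)"
      using count_list_le_load[OF P(1), of e] by (intro residual_backward) auto
    then show ?thesis by (rule rtranclp.rtrancl_into_rtrancl[OF that(2)])
  qed
  ultimately show False
    using assms(3,4) walk_avoids_set[of D "head D f1" M "tail D f2" "{w. residual\<^sup>*\<^sup>* s w}"]
    by auto
qed

lemma B_path_leaves_residual_reachable_once: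
  assumes P: "P \<in> set B" "e1 \<in> set P" "e2 \<in> set P"
    and leave: "\<And>e. e \<in> {e1, e2} \<Longrightarrow> residual\<^sup>*\<^sup>* s (tail D e) \<and> \<not> residual\<^sup>*\<^sup>* s (head D e)"
  shows "e1 = e2"
proof (rule ccontr)
  assume "e1 \<noteq> e2"
  have reenter: False if "P = L1 @ f1 # M @ f2 # L3" "f1 \<in> {e1, e2}" "f2 \<in> {e1, e2}"
    for L1 f1 M f2 L3
    using B_path_reenters_residual_reachable[OF P(1) that(1)] leave that(2,3) by blast
  obtain L1 L2 where L: "P = L1 @ e1 # L2" using P(2) split_list by metis
  then have "e2 \<in> set L1 \<or> e2 \<in> set L2" using P(3) \<open>e1 \<noteq> e2\<close> by auto
  then show False
  proof
    assume "e2 \<in> set L1"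
    then obtain M1 M2 where "L1 = M1 @ e2 # M2" using split_list by metis
    then show False using reenter[of M1 e2 M2 e1 L2] L by simp
  next
    assume "e2 \<in> set L2"
    then obtain M1 M2 where "L2 = M1 @ e2 # M2" using split_list by metis
    then show False using reenter[of L1 e1 M1 e2 M2] L by simp
  qed
qed

lemma small_cut_if_unreachable:
  assumes "\<not> residual\<^sup>*\<^sup>* s t"
  obtains C where "C \<subseteq> N" "card C \<le> \<sigma>" "\<forall>p. is_path D (arcs D) s t p \<longrightarrow> set p \<inter> C \<noteq> {}"
proof -
  define R where "R = {w. residual\<^sup>*\<^sup>* s w}"
  define C where "C = {e\<in>N. tail D e \<in> R \<and> head D e \<notin> R}"
  have forward: "head D e \<in> R" if "e \<in> arcs D" "tail D e \<in> R" "e \<notin> N \<or> load B e = 0" for e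
  proof -
    have "residual (tail D e) (head D e)" using that(1,3) by (rule residual_forward)
    then show ?thesis using that(2) unfolding R_def by (simp add: rtranclp.rtrancl_into_rtrancl)
  qed
  have hits: "set p \<inter> C \<noteq> {}" if p: "is_path D (arcs D) s t p" for p
  proof -
    have "s \<in> R" "t \<notin> R" using assms unfolding R_def by auto
    moreover have "walk D s p t" "set p \<subseteq> arcs D" using p unfolding is_path_def by auto
    ultimately obtain e where e: "e \<in> set p" "tail D e \<in> R" "head D e \<notin> R"
      using walk_leaves_set[of D s p t R] by blast
    then have "e \<in> N" using forward \<open>set p \<subseteq> arcs D\<close> by blast
    then show ?thesis using e unfolding C_def by blast
  qed
  have on_B: "\<exists>i<\<sigma>. e \<in> set (B!i)" if "e \<in> C" for e
  proof (rule load_B_pos)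
    show "load B e \<noteq> 0" using that forward private_arcs unfolding C_def by blast
  qed
  define idx where "idx e = (SOME i. i < \<sigma> \<and> e \<in> set (B!i))" for e
  have idx: "idx e < \<sigma> \<and> e \<in> set (B!idx e)" if "e \<in> C" for e
    unfolding idx_def using someI_ex[OF on_B[OF that]] by simp
  have "inj_on idx C"
  proof (rule inj_onI)
    fix e1 e2 assume e: "e1 \<in> C" "e2 \<in> C" "idx e1 = idx e2"
    show "e1 = e2"
    proof (rule B_path_leaves_residual_reachable_once)
      show "B ! idx e1 \<in> set B" using idx[OF e(1)] B_length by auto
      show "e1 \<in> set (B ! idx e1)" "e2 \<in> set (B ! idx e1)" using idx[OF e(1)] idx[OF e(2)] e(3) by auto
    qed (use e in \<open>auto simp: C_def R_def\<close>)
  qed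
  moreover have "idx ` C \<subseteq> {..<\<sigma>}" using idx by auto
  ultimately have "card C \<le> card {..<\<sigma>}" by (intro card_inj_on_le) auto
  moreover have "C \<subseteq> N" unfolding C_def by auto
  ultimately show ?thesis using that hits by simp
qed

lemma augment_count_support:
  "rtrancl_path residual a vs c \<Longrightarrow> augment_count residual_choice a vs e \<noteq> 0 \<Longrightarrow>
    tail D e \<in> set (a # vs) \<and> head D e \<in> set (a # vs)"
proof (induction rule: rtrancl_path.induct)
  case (step a b vs c)
  show ?case
  proof (cases "e = fst (residual_choice a b)")
    case True
    then show ?thesis
      using residual_choice_step[OF step(1)] unfolding residual_step_def by (auto split: if_splits)
  next
    case False
    then show ?thesis using step by auto
  qed
qed simp

lemma augment_count_cases:
  "rtrancl_path residual a vs c \<Longrightarrow> distinct (a # vs) \<Longrightarrow>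
    augment_count residual_choice a vs e = 0 \<or>
    (augment_count residual_choice a vs e = 1 \<and> e \<in> arcs D \<and> (e \<notin> N \<or> load B e = 0)) \<or>
    (augment_count residual_choice a vs e = -1 \<and> e \<in> arcs D \<and> 1 \<le> load B e)"
proof (induction rule: rtrancl_path.induct)
  case (step a b vs c)
  define e0 where "e0 = fst (residual_choice a b)"
  have step0: "residual_step a b (residual_choice a b)" using step(1) by (rule residual_choice_step)
  have "augment_count residual_choice b vs e0 = 0"
  proof (rule ccontr)
    assume "augment_count residual_choice b vs e0 \<noteq> 0"
    then have "tail D e0 \<in> set (b # vs) \<and> head D e0 \<in> set (b # vs)"
      using augment_count_support step(2) by blast
    then show False using step0 step.prems unfolding residual_step_def e0_def by (auto split: if_splits)
  qed
  then show ?case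
    using step0 step.IH step.prems unfolding residual_step_def e0_def by (auto split: if_splits)
qed simp

lemma net_out_augment_count:
  "rtrancl_path residual a vs c \<Longrightarrow>
    net_out (augment_count residual_choice a vs) v = of_bool (v = a) - of_bool (v = c)"
proof (induction rule: rtrancl_path.induct)
  case (step a b vs c)
  define e0 where "e0 = fst (residual_choice a b)"
  define d where "d = (if snd (residual_choice a b) then 1 else -1 :: int)"
  have step0: "residual_step a b (residual_choice a b)" using step(1) by (rule residual_choice_step)
  then have e0: "e0 \<in> arcs D" unfolding residual_step_def e0_def by simp
  have "augment_count residual_choice a (b # vs) =
      (\<lambda>e. (if e = e0 then d else 0) + augment_count residual_choice b vs e)"
    unfolding e0_def d_def by auto
  then have "net_out (augment_count residual_choice a (b # vs)) v =
      net_out (\<lambda>e. if e = e0 then d else 0) v + net_out (augment_count residual_choice b vs) v"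
    by (simp add: net_out_add)
  also have "net_out (\<lambda>e. if e = e0 then d else 0) v = of_bool (v = a) - of_bool (v = b)"
    using step0 net_out_single_arc[OF e0, of d v]
    unfolding residual_step_def e0_def d_def by (auto split: if_splits)
  finally show ?case using step.IH by simp
qed simp

text \<open>Augmenting \<open>load B\<close> along a residual \<open>s\<close>-\<open>t\<close> path gives a flow of value \<open>\<sigma> + 1\<close>
  that is still at most 1 on private arcs; its decomposition contradicts the maximality of
  \<open>\<B>\<close>.\<close>

lemma residual_unreachable: "\<not> residual\<^sup>*\<^sup>* s t"
proof
  assume "residual\<^sup>*\<^sup>* s t"
  then obtain vs0 where "rtrancl_path residual s vs0 t" unfolding rtranclp_eq_rtrancl_path by blast
  then obtain vs where vs: "rtrancl_path residual s vs t" "distinct (s # vs)"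
    by (rule rtrancl_path_distinct)
  define g where "g e = int (load B e) + augment_count residual_choice s vs e" for e
  have "st_flow g (\<sigma> + 1)"
  proof -
    have "0 \<le> g e" if "e \<in> arcs D" for e
      using augment_count_cases[OF vs, of e] unfolding g_def by auto
    moreover have "net_out g v = int (\<sigma> + 1) * (of_bool (v = s) - of_bool (v = t))" for v
    proof -
      have "net_out (\<lambda>e. int (load B e)) v = int \<sigma> * (of_bool (v = s) - of_bool (v = t))"
        using paths_st_flow[of B] B_path B_length unfolding st_flow_def by simp
      then show ?thesis
        unfolding g_def net_out_add net_out_augment_count[OF vs(1)] by (simp add: algebra_simps)
    qed
    ultimately show ?thesis unfolding st_flow_def by blast
  qed
  moreover have "g e \<le> 1" if "e \<in> N" for e
    using augment_count_cases[OF vs, of e] load_B_le_1[OF that] that unfolding g_def by auto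
  ultimately obtain Ps where "Ndisj_family D N Ps" "length Ps = \<sigma> + 1"
    by (metis Ndisj_family_of_flow)
  then show False using Ndisj_family_length_le_sigma by force
qed

theorem min_private_cut:
  obtains C where "C \<subseteq> N" "card C = \<sigma>" "\<forall>p. is_path D (arcs D) s t p \<longrightarrow> set p \<inter> C \<noteq> {}"
proof -
  obtain C where C: "C \<subseteq> N" "card C \<le> \<sigma>" "\<forall>p. is_path D (arcs D) s t p \<longrightarrow> set p \<inter> C \<noteq> {}"
    using residual_unreachable by (rule small_cut_if_unreachable)
  have "\<sigma> \<le> card C"
    unfolding B_length[symmetric]
  proof (rule length_le_card_if_hit)
    show "finite C" using C(1) finite_private by (rule finite_subset)
    show "\<forall>i<length B. set (B!i) \<inter> C \<noteq> {}" using C(3) B_path by simp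
    show "\<forall>i<length B. \<forall>j<length B. i \<noteq> j \<longrightarrow> set (B!i) \<inter> set (B!j) \<inter> C = {}"
    proof (intro allI impI)
      fix i j assume "i < length B" "j < length B" "i \<noteq> j"
      then have "set (B!i) \<inter> set (B!j) \<inter> N = {}" using B_disjoint B_length by simp
      then show "set (B!i) \<inter> set (B!j) \<inter> C = {}" using C(1) by blast
    qed
  qed
  then show ?thesis using that C by simp
qed

end

lemma (in private_network) exists_min_private_cut:
  obtains C where "C \<subseteq> N" "card C = \<sigma>" "\<forall>p. is_path D (arcs D) s t p \<longrightarrow> set p \<inter> C \<noteq> {}"
proof -
  obtain B where "Ndisj_family D N B" "length B = \<sigma>" by (rule exists_max_Ndisj_family)
  then interpret max_private_family D N B by unfold_locales
  show ?thesis using min_private_cut that by blast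
qed

section \<open>The sequential LPs\<close>

lemma Xseq_Suc_subset: "Xseq D N (Suc k) \<subseteq> Xseq D N k"
  by (auto simp: lp_feasible_def)

lemma Xseq_subset_Xseq_1: "1 \<le> k \<Longrightarrow> Xseq D N k \<subseteq> Xseq D N 1"
  using lift_Suc_antimono_le[of "Xseq D N", OF Xseq_Suc_subset] by blast

lemma path_weight_constant_if_fixed:
  "\<forall>e\<in>set L \<inter> N. e \<in> Nk D N k \<Longrightarrow> \<exists>c. \<forall>y\<in>Xseq D N k. path_weight N y L = c"
proof (induction L)
  case Nil
  show ?case by (simp add: path_weight_def)
next
  case (Cons e L)
  obtain c where c: "\<forall>y\<in>Xseq D N k. path_weight N y L = c" using Cons by auto
  obtain c' where "\<forall>y\<in>Xseq D N k. (if e \<in> N then y e else 0) = c'"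
    using Cons.prems by (cases "e \<in> N") (auto simp: Nk_def)
  then show ?case using c by (intro exI[of _ "c' + c"]) (simp add: path_weight_def)
qed

context private_network
begin

lemma private_fixed: "N \<in> fixset N (chi D N)"
  unfolding fixset_def chi_def by auto

lemma proper_subset_not_fixed:
  assumes "0 < \<sigma>" "S \<subseteq> N" "S \<noteq> {}" "S \<noteq> N"
  shows "S \<notin> fixset N (chi D N)"
proof
  assume "S \<in> fixset N (chi D N)"
  then obtain c where c: "\<forall>x\<in>chi D N. sum x S = c" unfolding fixset_def by auto
  obtain a b where "a \<in> S" "b \<in> N" "b \<notin> S" using assms(2-4) by blast
  define y where "y c e = (if e = c then real \<sigma> else 0)" for c e :: 'e
  have "finite S" using assms(2) finite_private by (rule finite_subset)
  have "y a \<in> chi D N" "y b \<in> chi D N"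
    using \<open>a \<in> S\<close> \<open>b \<in> N\<close> assms(2) finite_private unfolding chi_def y_def by auto
  then have "sum (y a) S = sum (y b) S" using c by simp
  then show False using \<open>a \<in> S\<close> \<open>b \<notin> S\<close> \<open>finite S\<close> assms(1) unfolding y_def by simp
qed

text \<open>The indicator vector of a minimum private cut is feasible for \<open>LP\<^sub>1\<close> with \<open>\<epsilon> = 0\<close>:
  every family of arc-disjoint paths of \<open>D\<^sub>S\<close> meets the cut in distinct arcs of \<open>S\<close>.\<close>

lemma lp_1_feasible_0: "\<exists>y. lp_feasible D N (chi D N) y 0"
proof -
  obtain C where C: "C \<subseteq> N" "card C = \<sigma>" "\<forall>p. is_path D (arcs D) s t p \<longrightarrow> set p \<inter> C \<noteq> {}"
    by (rule exists_min_private_cut)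
  have fC: "finite C" using C(1) finite_private by (rule finite_subset)
  define y where "y e = (if e \<in> C then 1 else 0 :: real)" for e
  have "sum y N = real (card (N \<inter> C))"
    using finite_private unfolding y_def by (simp add: sum.inter_restrict[symmetric])
  then have "y \<in> chi D N" using C(1,2) unfolding chi_def y_def by (auto simp: Int_absorb1)
  moreover have "gt D N S \<le> sum y S" if S: "S \<subseteq> N" "S \<notin> fixset N (chi D N)" for S
  proof -
    have "gamma D N S \<le> card (C \<inter> S)"
    proof (rule gamma_le, rule length_le_card_if_hit)
      fix Ps assume Ps: "disj_family D (S \<union> (arcs D - N)) Ps"
      show "finite (C \<inter> S)" using fC by simp
      show "\<forall>i<length Ps. set (Ps!i) \<inter> (C \<inter> S) \<noteq> {}"
      proof (intro allI impI)
        fix i assume "i < length Ps"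
        then have p: "is_path D (S \<union> (arcs D - N)) s t (Ps!i)"
          using Ps unfolding disj_family_def by auto
        then have "is_path D (arcs D) s t (Ps!i)"
          using S(1) private_arcs by (elim is_path_mono) auto
        then obtain e where "e \<in> set (Ps!i)" "e \<in> C" using C(3) by blast
        moreover have "e \<in> S" using calculation p C(1) unfolding is_path_def by auto
        ultimately show "set (Ps!i) \<inter> (C \<inter> S) \<noteq> {}" by blast
      qed
      show "\<forall>i<length Ps. \<forall>j<length Ps. i \<noteq> j \<longrightarrow> set (Ps!i) \<inter> set (Ps!j) \<inter> (C \<inter> S) = {}"
        using Ps unfolding disj_family_def by blast
    qed
    moreover have "S \<noteq> N" using S(2) private_fixed by auto
    moreover have "real (card (C \<inter> S)) = sum y S"
      using S(1) finite_private unfolding y_def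
      by (simp add: sum.inter_restrict[symmetric] Int_commute finite_subset)
    ultimately show ?thesis unfolding gt_def by simp
  qed
  ultimately show ?thesis unfolding lp_feasible_def by auto
qed

lemma Xseq_1_ge_gt:
  assumes "x \<in> Xseq D N 1"
  shows "x \<in> chi D N" and "\<And>S. S \<subseteq> N \<Longrightarrow> S \<notin> fixset N (chi D N) \<Longrightarrow> gt D N S \<le> sum x S"
proof -
  obtain \<epsilon> where \<epsilon>: "lp_feasible D N (chi D N) x \<epsilon>"
    "\<forall>y \<delta>. lp_feasible D N (chi D N) y \<delta> \<longrightarrow> \<delta> \<le> \<epsilon>"
    using assms by auto
  then have "0 \<le> \<epsilon>" using lp_1_feasible_0 by blast
  show "x \<in> chi D N" using \<epsilon>(1) unfolding lp_feasible_def by blast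
  fix S assume "S \<subseteq> N" "S \<notin> fixset N (chi D N)"
  then have "(1 + \<epsilon>) * gt D N S \<le> sum x S" using \<epsilon>(1) unfolding lp_feasible_def by blast
  moreover have "0 \<le> \<epsilon> * gt D N S" using \<open>0 \<le> \<epsilon>\<close> unfolding gt_def by simp
  ultimately show "gt D N S \<le> sum x S" by (simp add: algebra_simps)
qed

definition fractional_cut :: "('e \<Rightarrow> real) \<Rightarrow> bool" where
  "fractional_cut x \<longleftrightarrow> x \<in> chi D N \<and> (\<forall>W. is_path D (arcs D) s t W \<longrightarrow> 1 \<le> sum x (set W \<inter> N))"

lemma fractional_cutD:
  assumes "fractional_cut x"
  shows "\<forall>e\<in>N. 0 \<le> x e" and "sum x N = real \<sigma>"
    and "\<And>W. is_path D (arcs D) s t W \<Longrightarrow> 1 \<le> sum x (set W \<inter> N)"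
  using assms unfolding fractional_cut_def chi_def by auto

lemma Xseq_1_fractional_cut:
  assumes x: "x \<in> Xseq D N 1"
  shows "fractional_cut x"
proof -
  have "1 \<le> sum x (set W \<inter> N)" if W: "is_path D (arcs D) s t W" for W
  proof (cases "set W \<inter> N = N")
    case True
    then show ?thesis
      using Xseq_1_ge_gt(1)[OF x] one_le_sigma_if_path[OF W] unfolding chi_def by simp
  next
    case False
    have "0 < \<sigma>" using one_le_sigma_if_path[OF W] by simp
    then have "set W \<inter> N \<notin> fixset N (chi D N)"
      using False paths_meet_private W by (intro proper_subset_not_fixed) auto
    then have "gt D N (set W \<inter> N) \<le> sum x (set W \<inter> N)" by (intro Xseq_1_ge_gt(2)[OF x]) auto
    moreover have "1 \<le> gamma D N (set W \<inter> N)" using W by (rule one_le_gamma_if_path) auto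
    ultimately show ?thesis using False unfolding gt_def by simp
  qed
  then show ?thesis unfolding fractional_cut_def using Xseq_1_ge_gt(1)[OF x] by blast
qed

lemma Xseq_fractional_cut: "1 \<le> k \<Longrightarrow> x \<in> Xseq D N k \<Longrightarrow> fractional_cut x"
  using Xseq_subset_Xseq_1 Xseq_1_fractional_cut by blast

lemma re_le_if_sum_le:
  assumes x: "fractional_cut x" and T: "T \<subseteq> N"
    and P: "is_path D (arcs D) s t P" "set P \<inter> N \<subseteq> T"
    and sum_T: "sum x T \<le> 1 + d"
  shows "re D N x T \<le> ereal d"
proof -
  have g1: "1 \<le> gt D N T"
    using one_le_sigma_if_path[OF P(1)] one_le_gamma_if_path[OF P T] unfolding gt_def by simp
  have "0 \<le> sum x T" using fractional_cutD(1)[OF x] T by (intro sum_nonneg) auto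
  then have "(1 + d) * 1 \<le> (1 + d) * gt D N T" using sum_T g1 by (intro mult_left_mono) auto
  then have "sum x T - gt D N T \<le> d * gt D N T" using sum_T by (simp add: algebra_simps)
  then show ?thesis using g1 unfolding re_def by (simp add: pos_divide_le_eq)
qed

end

section \<open>Potentials along a maximum family\<close>

context max_private_family
begin

lemma fractional_cut_on_B:
  assumes x: "fractional_cut x"
  shows "p \<in> set B \<Longrightarrow> sum x (set p \<inter> N) = 1"
    and "e \<in> N \<Longrightarrow> \<forall>p\<in>set B. e \<notin> set p \<Longrightarrow> x e = 0"
proof -
  define a where "a i = sum x (set (B!i) \<inter> N)" for i
  define U where "U = (\<Union>i<\<sigma>. set (B!i) \<inter> N)"
  have a1: "1 \<le> a i" if "i < \<sigma>" for i
    using fractional_cutD(3)[OF x B_path] that B_length unfolding a_def by simp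
  have sum_U: "sum x U = (\<Sum>i<\<sigma>. a i)"
    unfolding U_def a_def
  proof (rule sum.UNION_disjoint)
    show "\<forall>i\<in>{..<\<sigma>}. \<forall>j\<in>{..<\<sigma>}. i \<noteq> j \<longrightarrow> (set (B!i) \<inter> N) \<inter> (set (B!j) \<inter> N) = {}"
      using B_disjoint by blast
  qed auto
  have "U \<subseteq> N" unfolding U_def by auto
  then have split: "sum x N = sum x U + sum x (N - U)"
    using finite_private by (metis add.commute sum.subset_diff)
  have rest: "0 \<le> sum x (N - U)" using fractional_cutD(1)[OF x] by (intro sum_nonneg) auto
  have "(\<Sum>i<\<sigma>. a i - 1) \<le> 0"
    using split rest sum_U fractional_cutD(2)[OF x] by (simp add: sum_subtractf)
  moreover have "\<forall>i\<in>{..<\<sigma>}. 0 \<le> a i - 1" using a1 by auto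
  ultimately have "\<forall>i\<in>{..<\<sigma>}. a i - 1 = 0"
    using sum_nonneg_eq_0_iff[of "{..<\<sigma>}" "\<lambda>i. a i - 1"] sum_nonneg[of "{..<\<sigma>}" "\<lambda>i. a i - 1"]
    by simp
  then have a_eq: "a i = 1" if "i < \<sigma>" for i using that by simp
  show "sum x (set p \<inter> N) = 1" if "p \<in> set B" for p
    using that a_eq B_length unfolding a_def by (metis in_set_conv_nth)
  have "sum x (N - U) = 0" using split sum_U a_eq fractional_cutD(2)[OF x] by simp
  then have "\<forall>e\<in>N - U. x e = 0"
    using fractional_cutD(1)[OF x] finite_private by (subst sum_nonneg_eq_0_iff[symmetric]) auto
  moreover have "e \<in> N - U" if "e \<in> N" "\<forall>p\<in>set B. e \<notin> set p" for e
    using that B_length unfolding U_def by auto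
  ultimately show "x e = 0" if "e \<in> N" "\<forall>p\<in>set B. e \<notin> set p" for e
    using that by blast
qed

lemma B_path_weight: "fractional_cut x \<Longrightarrow> p \<in> set B \<Longrightarrow> path_weight N x p = 1"
  using path_weight_distinct[OF is_path_distinct[OF B_path]] fractional_cut_on_B(1) by simp

text \<open>Replacing the prefix \<open>P\<^sub>1\<close> of a path of \<open>\<B>\<close> by another \<open>s\<close>-\<open>w\<close> path gives an
  \<open>s\<close>-\<open>t\<close> walk, which contains a path of weight at least 1 = the weight of \<open>P\<^sub>1 P\<^sub>2\<close>.\<close>

lemma B_prefix_shortest:
  assumes x: "fractional_cut x" and P: "P1 @ P2 \<in> set B" "walk D w P2 t"
    and p: "is_path D (arcs D) s w p"
  shows "path_weight N x P1 \<le> path_weight N x p"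
proof -
  have "walk D s (p @ P2) t" using p P(2) unfolding is_path_def walk_append by blast
  moreover have "set (p @ P2) \<subseteq> arcs D" using p B_path[OF P(1)] unfolding is_path_def by auto
  ultimately obtain W where W: "is_path D (arcs D) s t W" "set W \<subseteq> set (p @ P2)"
    using src_ne_snk walk_imp_path by metis
  have "1 \<le> sum x (set W \<inter> N)" by (rule fractional_cutD(3)[OF x W(1)])
  also have "\<dots> \<le> sum x (set (p @ P2) \<inter> N)"
    using W(2) fractional_cutD(1)[OF x] by (intro sum_mono2) auto
  also have "\<dots> \<le> path_weight N x (p @ P2)"
    by (rule sum_le_path_weight[OF fractional_cutD(1)[OF x]])
  finally show ?thesis using B_path_weight[OF x P(1)] by simp
qed

lemma phi_on_B_path:
  assumes x: "fractional_cut x" and P: "P1 @ P2 \<in> set B"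
    and w: "walk D s P1 w" "walk D w P2 t"
  shows "phi D N x w = path_weight N x P1"
proof -
  have pP: "is_path D (arcs D) s t (P1 @ P2)" by (rule B_path[OF P])
  show ?thesis
  proof (cases "w = s")
    case True
    have "P1 = []"
    proof (rule ccontr)
      assume "P1 \<noteq> []"
      then have "w \<in> set (map (head D) P1)"
        using walk_end_last[OF w(1)] last_in_set[of "map (head D) P1"] by simp
      then show False using True pP unfolding is_path_def by auto
    qed
    then show ?thesis using True unfolding phi_def path_weight_def by simp
  next
    case False
    then have "P1 \<noteq> []" using w(1) by (cases P1) auto
    then have "is_path D (arcs D) s w P1" using pP w(1) unfolding is_path_def by auto
    then have "Inf {path_weight N x p | p. is_path D (arcs D) s w p} = path_weight N x P1"
      using B_prefix_shortest[OF x P w(2)] by (intro cInf_eq_minimum) auto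
    then show ?thesis using False unfolding phi_def path_weight_def by simp
  qed
qed

lemma on_B_split:
  assumes "on_B D B w"
  obtains P1 P2 where "P1 @ P2 \<in> set B" "walk D s P1 w" "walk D w P2 t"
proof -
  obtain P where P: "P \<in> set B" "w \<in> set (s # map (head D) P)"
    using assms unfolding on_B_def by auto
  then have "walk D s P t" using B_path unfolding is_path_def by auto
  then obtain P1 P2 where "P = P1 @ P2" "walk D s P1 w" "walk D w P2 t"
    using P(2) by (rule walk_split_at_vertex)
  then show ?thesis using that P(1) by blast
qed

lemma B_arc_ends_on_B: "p \<in> set B \<Longrightarrow> e \<in> set p \<Longrightarrow> on_B D B (tail D e) \<and> on_B D B (head D e)"
  using walk_arc_ends[of D s p t e] B_path unfolding on_B_def is_path_def by auto

lemma jump_arcs_off_B: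
  assumes J: "is_jump D B a b Q" and "e \<in> set Q" "p \<in> set B"
  shows "e \<notin> set p"
proof
  assume "e \<in> set p"
  then have ends: "on_B D B (tail D e)" "on_B D B (head D e)"
    using B_arc_ends_on_B assms(3) by auto
  have wQ: "walk D a Q b" using J unfolding is_jump_def is_path_def by auto
  have inner: "\<not> on_B D B z" if "z \<in> set (butlast (map (head D) Q))" for z
    using J that unfolding is_jump_def by blast
  obtain L1 L2 where Q: "Q = L1 @ e # L2" using \<open>e \<in> set Q\<close> split_list by metis
  consider "L2 \<noteq> []" | "L2 = []" "L1 = []" | "L2 = []" "L1 \<noteq> []" by blast
  then show False
  proof cases
    case 1
    then have "head D e \<in> set (butlast (map (head D) Q))" using Q by (simp add: butlast_append)
    then show False using inner ends by blast
  next
    case 2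
    then show False using J Q \<open>e \<in> set p\<close> assms(3) unfolding is_jump_def by auto
  next
    case 3
    obtain m where m: "walk D a L1 m" "walk D m [e] b" using wQ Q 3(1) walk_append by metis
    have "tail D e \<in> set (map (head D) L1)"
      using m(2) walk_end_last[OF m(1) 3(2)] last_in_set[of "map (head D) L1"] 3(2) by simp
    moreover have "butlast (map (head D) Q) = map (head D) L1" using Q 3(1) by simp
    ultimately show False using inner ends by auto
  qed
qed

lemma B_arcs_in_Ek: "p \<in> set B \<Longrightarrow> set p \<subseteq> Ek D N B k"
  using B_path jump_arcs_off_B unfolding Ek_def is_path_def by blast

lemma jump_detour_path_bound:
  assumes x: "fractional_cut x" and Q: "is_jump D B u v Q"
    and U: "U1 @ U2 \<in> set B" "walk D s U1 u" "walk D u U2 t"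
    and V: "V1 @ V2 \<in> set B" "walk D s V1 v" "walk D v V2 t"
    and A: "distinct (s # map (head D) (U1 @ Q @ V2))"
  shows "\<exists>R\<in>Rfam D N B k u v. re D N x R \<le> ereal (phi D N x u - phi D N x v)"
proof -
  define A where "A = U1 @ Q @ V2"
  have Q': "walk D u Q v" "Q \<noteq> []" "set Q \<subseteq> arcs D"
    using Q unfolding is_jump_def is_path_def by auto
  have "walk D s A t" unfolding A_def walk_append using U(2) Q'(1) V(3) by blast
  moreover have "set U1 \<subseteq> Ek D N B k" "set V2 \<subseteq> Ek D N B k"
    using B_arcs_in_Ek[OF U(1), of k] B_arcs_in_Ek[OF V(1), of k] by auto
  ultimately have pA: "is_path D (Ek D N B k \<union> set Q) s t A"
    using A Q'(2) unfolding is_path_def A_def by auto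
  have "\<exists>Ps Q'. N \<inter> \<Union>(set ` set [A]) = N \<inter> \<Union>(set ` set Ps) \<and> is_jump D B u v Q' \<and>
      disj_family D (Ek D N B k \<union> set Q') Ps \<and> (\<exists>P\<in>set Ps. set Q' \<subseteq> set P)"
    using Q disj_family_singleton[OF pA]
    by (intro exI[of _ "[A]"] exI[of _ Q]) (auto simp: A_def)
  then have R: "set A \<inter> N \<in> Rfam D N B k u v" unfolding Rfam_def by (auto simp: Int_commute)
  have "path_weight N x Q = 0"
    using jump_arcs_off_B[OF Q] fractional_cut_on_B(2)[OF x] by (intro path_weight_eq_0) blast
  moreover have "path_weight N x V1 + path_weight N x V2 = 1"
    using B_path_weight[OF x V(1)] by simp
  moreover have "sum x (set A \<inter> N) = path_weight N x A"
    using path_weight_distinct[OF is_path_distinct[OF pA], of N x] by simp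
  ultimately have "sum x (set A \<inter> N) = 1 + (phi D N x u - phi D N x v)"
    using phi_on_B_path[OF x U(1) U(2,3)] phi_on_B_path[OF x V(1) V(2,3)]
    unfolding A_def by simp
  moreover have "is_path D (arcs D) s t A"
    using Q'(3) by (intro is_path_mono[OF pA]) (auto simp: Ek_def)
  ultimately have "re D N x (set A \<inter> N) \<le> ereal (phi D N x u - phi D N x v)"
    using x by (intro re_le_if_sum_le) auto
  then show ?thesis using R by blast
qed

text \<open>The inner vertices of a jump lie on no path of \<open>\<B>\<close>, so a repeated vertex of the detour
  lies on both paths of \<open>\<B>\<close> that it uses.\<close>

lemma jump_detour_crossing_vertex:
  assumes Q: "is_jump D B u v Q"
    and U: "U1 @ U2 \<in> set B"
    and V: "V1 @ V2 \<in> set B" "walk D s V1 v"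
    and not_path: "\<not> distinct (s # map (head D) (U1 @ Q @ V2))"
  obtains z where "z \<in> set (s # map (head D) U1)" "z \<in> set (v # map (head D) V2)"
proof -
  have dU: "distinct (s # map (head D) U1)" using B_path[OF U] unfolding is_path_def by auto
  have dV: "distinct ((s # map (head D) V1) @ map (head D) V2)"
    using B_path[OF V(1)] unfolding is_path_def by simp
  have "v \<in> set (s # map (head D) V1)" using V(2) by (rule walk_end_mem)
  moreover have "set (s # map (head D) V1) \<inter> set (map (head D) V2) = {}"
    using dV by (simp only: distinct_append)
  ultimately have v_V2: "v \<notin> set (map (head D) V2)" by blast
  have pQ: "walk D u Q v" "Q \<noteq> []" "distinct (map (head D) Q)"
    using Q unfolding is_jump_def is_path_def by auto
  have inner: "\<not> on_B D B z" if "z \<in> set (butlast (map (head D) Q))" for z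
    using Q that unfolding is_jump_def by blast
  have "map (head D) Q = butlast (map (head D) Q) @ [v]"
    using append_butlast_last_id[of "map (head D) Q"] walk_end_last[OF pQ(1,2)] pQ(2) by simp
  then have "set (map (head D) Q) = set (butlast (map (head D) Q) @ [v])" by (rule arg_cong)
  then have heads_Q: "set (map (head D) Q) = insert v (set (butlast (map (head D) Q)))" by simp
  have on_U: "on_B D B z" if "z \<in> set (s # map (head D) U1)" for z
    using that U unfolding on_B_def by (intro bexI[of _ "U1 @ U2"]) auto
  have on_V: "on_B D B z" if "z \<in> set (map (head D) V2)" for z
    using that V(1) unfolding on_B_def by (intro bexI[of _ "V1 @ V2"]) auto
  have "set (map (head D) Q) \<inter> set (map (head D) V2) = {}"
    unfolding heads_Q using inner on_V v_V2 by blast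
  then have "distinct (map (head D) Q @ map (head D) V2)"
    using pQ(3) dV by simp
  moreover have "\<not> distinct ((s # map (head D) U1) @ (map (head D) Q @ map (head D) V2))"
    using not_path by simp
  ultimately obtain z where z: "z \<in> set (s # map (head D) U1)"
      "z \<in> set (map (head D) Q) \<or> z \<in> set (map (head D) V2)"
    using dU by (auto simp only: distinct_append set_append)
  then have "z \<in> set (v # map (head D) V2)" unfolding heads_Q using inner on_U by auto
  then show ?thesis using that z(1) by blast
qed

lemma phi_diff_crossing:
  assumes y: "fractional_cut y"
    and U: "U11 @ U12 @ U2 \<in> set B" "walk D s U11 z" "walk D z U12 u" "walk D u U2 t"
    and V: "V1 @ V21 @ V22 \<in> set B" "walk D s V1 v" "walk D v V21 z" "walk D z V22 t"
  shows "phi D N y u - phi D N y v = path_weight N y (U12 @ V21)"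
proof -
  have "phi D N y u = path_weight N y (U11 @ U12)"
    using U by (intro phi_on_B_path[OF y, of _ U2]) (auto simp: walk_append)
  moreover have "phi D N y z = path_weight N y U11"
    using U by (intro phi_on_B_path[OF y, of _ "U12 @ U2"]) (auto simp: walk_append)
  moreover have "phi D N y z = path_weight N y (V1 @ V21)"
    using V by (intro phi_on_B_path[OF y, of _ V22]) (auto simp: walk_append)
  moreover have "phi D N y v = path_weight N y V1"
    using V by (intro phi_on_B_path[OF y, of _ "V21 @ V22"]) (auto simp: walk_append)
  ultimately show ?thesis by simp
qed

lemma private_arc_bound:
  assumes x: "fractional_cut x" and two: "2 \<le> \<sigma>" and e: "e \<in> N" "p \<in> set B" "e \<in> set p"
  shows "\<exists>Oe\<in>Ofam D N B k e. re D N x Oe \<le> ereal (x e)"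
proof -
  obtain i where i: "i < \<sigma>" "B!i = p" using e(2) B_length by (metis in_set_conv_nth)
  define j where "j = (if i = 0 then 1 else 0 :: nat)"
  have j: "j < \<sigma>" "j \<noteq> i" using two i(1) unfolding j_def by auto
  define P where "P = B!j"
  have P: "P \<in> set B" "e \<notin> set P"
    using B_length j B_disjoint[OF i(1) j(1) j(2)[symmetric]] i(2) e unfolding P_def by auto
  then have "is_path D (Ek D N B k - {e}) s t P"
    using B_path[OF P(1)] B_arcs_in_Ek[OF P(1)] unfolding is_path_def by auto
  then have "(N \<inter> \<Union>(set ` set [P])) \<union> {e} \<in> Ofam D N B k e"
    unfolding Ofam_def using disj_family_singleton by blast
  moreover have "(N \<inter> \<Union>(set ` set [P])) \<union> {e} = insert e (set P \<inter> N)" by auto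
  moreover have "sum x (insert e (set P \<inter> N)) = x e + 1"
    using fractional_cut_on_B(1)[OF x P(1)] P(2) finite_private by simp
  then have "re D N x (insert e (set P \<inter> N)) \<le> ereal (x e)"
    using x e(1) B_path[OF P(1)] by (intro re_le_if_sum_le) auto
  ultimately show ?thesis by metis
qed


lemma jump_detour_crossing_bound:
  assumes X: "\<forall>y\<in>Xseq D N k. fractional_cut y" "x \<in> Xseq D N k" and two: "2 \<le> \<sigma>"
    and uv: "(u, v) \<in> Jpairs D B - Jk D N B k" and Q: "is_jump D B u v Q"
    and U: "U1 @ U2 \<in> set B" "walk D s U1 u" "walk D u U2 t"
    and V: "V1 @ V2 \<in> set B" "walk D s V1 v" "walk D v V2 t"
    and not_path: "\<not> distinct (s # map (head D) (U1 @ Q @ V2))"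
  shows "\<exists>e\<in>N - Nk D N k. \<exists>Oe\<in>Ofam D N B k e. re D N x Oe \<le> ereal (phi D N x u - phi D N x v)"
proof -
  obtain z where "z \<in> set (s # map (head D) U1)" "z \<in> set (v # map (head D) V2)"
    using jump_detour_crossing_vertex[OF Q U(1) V(1,2) not_path] by blast
  then obtain U11 U12 V21 V22 where "U1 = U11 @ U12" "walk D s U11 z" "walk D z U12 u"
      "V2 = V21 @ V22" "walk D v V21 z" "walk D z V22 t"
    using walk_split_at_vertex U(2) V(3) by metis
  then have diff: "phi D N y u - phi D N y v = path_weight N y (U12 @ V21)"
    if "y \<in> Xseq D N k" for y
    using phi_diff_crossing X(1) that U V by simp
  obtain e where e: "e \<in> set (U12 @ V21)" "e \<in> N" "e \<notin> Nk D N k"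
    using path_weight_constant_if_fixed[of "U12 @ V21" N D k] diff uv unfolding Jk_def by fastforce
  have "e \<in> set (U1 @ U2) \<or> e \<in> set (V1 @ V2)" using e(1) \<open>U1 = _\<close> \<open>V2 = _\<close> by auto
  then obtain Oe where "Oe \<in> Ofam D N B k e" "re D N x Oe \<le> ereal (x e)"
    using private_arc_bound[OF _ two e(2)] X U(1) V(1) by blast
  moreover have "x e \<le> phi D N x u - phi D N x v"
    using diff[OF X(2)] arc_le_path_weight[OF fractional_cutD(1) e(1,2)] X by simp
  ultimately have "re D N x Oe \<le> ereal (phi D N x u - phi D N x v)" by (metis ereal_less_eq(3) order_trans)
  then show ?thesis using e(2,3) \<open>Oe \<in> Ofam D N B k e\<close> by blast
qed
end

theorem lemma15:
  fixes D :: "('v,'e) network" and N :: "'e set" and B :: "'e list list"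
    and k :: nat and x :: "'e \<Rightarrow> real" and u v :: 'v
  assumes "finite (verts D)" and "finite (arcs D)"
    and "\<forall>e\<in>arcs D. tail D e \<in> verts D \<and> head D e \<in> verts D"
    and "src D \<in> verts D" and "snk D \<in> verts D" and "src D \<noteq> snk D"
    and "N \<subseteq> arcs D"
    and "\<forall>p. is_path D (arcs D) (src D) (snk D) p \<longrightarrow> set p \<inter> N \<noteq> {}"
    and "\<forall>e\<in>arcs D. \<exists>p. is_path D (arcs D) (src D) (snk D) p \<and> e \<in> set p"
    and "sigmaN D N \<ge> 2"
    and "Ndisj_family D N B" and "length B = sigmaN D N"
    and "k \<ge> 1"
    and "x \<in> Xseq D N k"
    and "(u, v) \<in> Jpairs D B - Jk D N B k"
  shows "min (INF Oe\<in>(\<Union>e\<in>N - Nk D N k. Ofam D N B k e). re D N x Oe)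
             (INF Rs\<in>(\<Union>(u',v')\<in>Jpairs D B - Jk D N B k. Rfam D N B k u' v'). re D N x Rs)
           \<le> ereal (phi D N x u - phi D N x v)"
proof -
  interpret max_private_family D N B using assms by unfold_locales auto
  have cut: "fractional_cut y" if "y \<in> Xseq D N k" for y
    using Xseq_fractional_cut assms(13) that .
  obtain Q where Q: "is_jump D B u v Q" using assms(15) unfolding Jpairs_def by auto
  obtain U1 U2 where U: "U1 @ U2 \<in> set B" "walk D s U1 u" "walk D u U2 t"
    using Q unfolding is_jump_def by (metis on_B_split)
  obtain V1 V2 where V: "V1 @ V2 \<in> set B" "walk D s V1 v" "walk D v V2 t"
    using Q unfolding is_jump_def by (metis on_B_split)
  show ?thesis
  proof (cases "distinct (s # map (head D) (U1 @ Q @ V2))")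
    case True
    then obtain R where "R \<in> Rfam D N B k u v" "re D N x R \<le> ereal (phi D N x u - phi D N x v)"
      using jump_detour_path_bound[OF cut[OF assms(14)] Q U V] by blast
    then show ?thesis using assms(15) by (intro min.coboundedI2 INF_lower2) auto
  next
    case False
    then obtain e Oe where "e \<in> N - Nk D N k" "Oe \<in> Ofam D N B k e"
        "re D N x Oe \<le> ereal (phi D N x u - phi D N x v)"
      using jump_detour_crossing_bound[OF _ assms(14,10,15) Q U V] cut by blast
    then show ?thesis by (intro min.coboundedI1 INF_lower2) auto
  qed
qed

end
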